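(* Let $\{\ket{j}\}_{j=0}^{7}$ be the computational basis of three qubits, where $\ket{j}=\ket{j_1j_2j_3}$ with $j=4j_1+2j_2+j_3$, and let $$\ket{\psi_4}=-\frac{1}{8\sqrt{2}}\left(\ket{0}+\ket{1}+\ket{2}+\ket{3}+\ket{4}+\ket{5}+\ket{6}-11\ket{7}\right),\qquad \rho_4=\ket{\psi_4}\bra{\psi_4}.$$ Denote by $A_4,B_4,C_4$ the first, second and third qubits of $\rho_4$. Then $$D(B_4C_4|A_4)=D(A_4C_4|B_4)=D(A_4B_4|C_4)=D(C_4|A_4B_4)=D(B_4|A_4C_4)=D(A_4|B_4C_4)$$ $$=-\tfrac{1}{32}(16+\sqrt{229})\log\left(\tfrac{1}{32}(16+\sqrt{229})\right)-\tfrac{1}{32}(16-\sqrt{229})\log\left(\tfrac{1}{32}(16-\sqrt{229})\right)\approx 0.17,$$ and moreover $D(B_4C_4|A_4)=S(\rho_{A_4})$ and $D(C_4|A_4B_4)=S(\rho_{A_4B_4})$.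
   Context: Logarithms are base 2, and $S(\sigma)=-\mathrm{Tr}(\sigma\log\sigma)$ is the von Neumann entropy; $\rho_{A_4}$ and $\rho_{A_4B_4}$ denote the reduced states of $\rho_4$ on the first qubit and on the first two qubits. For a state $\rho_{XY}$ on a bipartite system $X\otimes Y$ (here $X$ and $Y$ are complementary groups of the three qubits), the quantum discord with measurement on $X$ is $$D(Y|X)=\min_{\{E_a\}}\sum_a p_a S(\rho_{Y|a})+S(\rho_X)-S(\rho_{XY}),$$ where the minimum is over all POVMs $\{E_a\}$ on $X$ ($E_a\ge 0$, $\sum_a E_a=I$), $p_a=\mathrm{Tr}((E_a\otimes I)\rho_{XY})$, $\rho_{Y|a}=\mathrm{Tr}_X((E_a\otimes I)\rho_{XY})/p_a$, and $\rho_X,\rho_Y$ are reduced states. *)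

theory Defs
  imports Complex_Main "Jordan_Normal_Form.Char_Poly" "HOL-Computational_Algebra.Polynomial"
begin

definition mtrace :: "complex mat \<Rightarrow> complex" where
  "mtrace M = (\<Sum>i<dim_row M. M $$ (i, i))"

definition psd :: "nat \<Rightarrow> complex mat \<Rightarrow> bool" where
  "psd d E \<longleftrightarrow> E \<in> carrier_mat d d \<and>
     (\<forall>v \<in> carrier_vec d. let q = conjugate v \<bullet> (E *\<^sub>v v) in q \<in> \<real> \<and> Re q \<ge> 0)"

definition povm :: "nat \<Rightarrow> complex mat list \<Rightarrow> bool" where
  "povm d Es \<longleftrightarrow> (\<forall>E \<in> set Es. psd d E) \<and>
     (\<forall>i<d. \<forall>j<d. (\<Sum>a<length Es. (Es ! a) $$ (i, j)) = (1\<^sub>m d :: complex mat) $$ (i, j))"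

(* von Neumann entropy (log base 2): -sum of lambda log lambda over the eigenvalues
   (roots of the characteristic polynomial, with multiplicity); note 0 * log 2 0 = 0 *)
definition vn_entropy :: "complex mat \<Rightarrow> real" where
  "vn_entropy \<sigma> = - (\<Sum>x\<in>#proots (char_poly \<sigma>). Re x * log 2 (Re x))"

(* bipartite system X (x) Y, dims dX, dY, index i = a * dY + b *)
definition ptrace_X :: "nat \<Rightarrow> nat \<Rightarrow> complex mat \<Rightarrow> complex mat" where
  "ptrace_X dX dY M = mat dY dY (\<lambda>(b, b'). \<Sum>a<dX. M $$ (a * dY + b, a * dY + b'))"

definition ptrace_Y :: "nat \<Rightarrow> nat \<Rightarrow> complex mat \<Rightarrow> complex mat" where
  "ptrace_Y dX dY M = mat dX dX (\<lambda>(a, a'). \<Sum>b<dY. M $$ (a * dY + b, a' * dY + b))"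

definition kron_id :: "nat \<Rightarrow> nat \<Rightarrow> complex mat \<Rightarrow> complex mat" where
  "kron_id dX dY E = mat (dX * dY) (dX * dY)
     (\<lambda>(i, i'). if i mod dY = i' mod dY then E $$ (i div dY, i' div dY) else 0)"

(* quantum discord D(Y|X) of rho_XY, measurement on X; the "min" is rendered as Inf *)
definition discord :: "nat \<Rightarrow> nat \<Rightarrow> complex mat \<Rightarrow> real" where
  "discord dX dY R =
     Inf {(\<Sum>a<length Es.
            let M = kron_id dX dY (Es ! a) * R;
                p = Re (mtrace M)
            in p * vn_entropy ((1 / complex_of_real p) \<cdot>\<^sub>m ptrace_X dX dY M)) | Es. povm dX Es}
     + vn_entropy (ptrace_Y dX dY R) - vn_entropy R"

(* three qubits: |j> = |j1 j2 j3>, j = 4 j1 + 2 j2 + j3; qubit k in {0,1,2} has bit j div 2^(2-k) mod 2 *)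
definition qbit :: "nat \<Rightarrow> nat \<Rightarrow> nat" where
  "qbit j k = (j div 2 ^ (2 - k)) mod 2"

(* reorder the qubits as ks (a permutation of [0,1,2]): local index i has, at position m,
   the bit of qubit ks!m; returns the corresponding global index *)
definition perm_index :: "nat list \<Rightarrow> nat \<Rightarrow> nat" where
  "perm_index ks i = (\<Sum>m<3. qbit i m * 2 ^ (2 - ks ! m))"

definition reorder :: "nat list \<Rightarrow> complex mat \<Rightarrow> complex mat" where
  "reorder ks \<rho> = mat 8 8 (\<lambda>(i, i'). \<rho> $$ (perm_index ks i, perm_index ks i'))"

(* D(Y|X) for a three-qubit state, X and Y complementary lists of qubits (in increasing order) *)
definition discord3 :: "nat list \<Rightarrow> nat list \<Rightarrow> complex mat \<Rightarrow> real" where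
  "discord3 Y X \<rho> = discord (2 ^ length X) (2 ^ length Y) (reorder (X @ Y) \<rho>)"

definition psi4 :: "complex vec" where
  "psi4 = vec 8 (\<lambda>j. - 1 / (8 * sqrt 2) * (if j = 7 then -11 else 1))"

definition rho4 :: "complex mat" where
  "rho4 = mat 8 8 (\<lambda>(i, j). psi4 $ i * cnj (psi4 $ j))"

definition rho_A4 :: "complex mat" where
  "rho_A4 = ptrace_Y 2 4 rho4"

definition rho_A4B4 :: "complex mat" where
  "rho_A4B4 = ptrace_Y 4 2 rho4"

end

theory Submission
  imports Defs "Jordan_Normal_Form.Schur_Decomposition"
begin

(* The state rho4 is pure. Measuring X in its computational basis leaves pure conditional
   states on Y, and every term of the minimised sum is nonnegative, so the minimum is 0 and
   D(Y|X) = S(rho_X) - S(rho4) = S(rho_X). Since psi4 is invariant under permutations of the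
   qubits, all six discords reduce to the entropies of the one-qubit and the two-qubit reduced
   states. Both have the nonzero eigenvalues (16 +- sqrt 229)/32, each simple: the reduced
   states satisfy sigma^2 = sigma - 27/1024 and sigma^3 = sigma^2 - 27/1024 sigma, and the
   trace condition fixes the multiplicities. *)

section \<open>Spectra and von Neumann entropy\<close>

definition outer_mat :: "nat \<Rightarrow> (nat \<Rightarrow> complex) \<Rightarrow> complex mat" where
  "outer_mat n \<phi> = mat n n (\<lambda>(i, j). \<phi> i * cnj (\<phi> j))"

lemma outer_mat_carrier [simp]: "outer_mat n \<phi> \<in> carrier_mat n n"
  unfolding outer_mat_def by simp

lemma mtrace_mult_comm:
  assumes "A \<in> carrier_mat n n" "B \<in> carrier_mat n n"
  shows "mtrace (A * B) = mtrace (B * A)"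
proof -
  have "mtrace (A * B) = (\<Sum>i<n. \<Sum>j<n. A $$ (i, j) * B $$ (j, i))"
    using assms unfolding mtrace_def by (simp add: scalar_prod_def atLeast0LessThan)
  also have "\<dots> = (\<Sum>j<n. \<Sum>i<n. B $$ (j, i) * A $$ (i, j))"
    by (subst sum.swap) (simp add: mult.commute)
  also have "\<dots> = mtrace (B * A)"
    using assms unfolding mtrace_def by (simp add: scalar_prod_def atLeast0LessThan)
  finally show ?thesis .
qed

lemma proots_prod_linear_factors: "proots (\<Prod>a\<leftarrow>as. [:- a, 1:]) = mset (as :: complex list)"
proof (induction as)
  case (Cons a as)
  have "(\<Prod>a\<leftarrow>as. [:- a, 1:]) \<noteq> 0" by (auto simp: prod_list_zero_iff)
  then have "proots (\<Prod>a\<leftarrow>a # as. [:- a, 1:]) = proots [:- a, 1:] + proots (\<Prod>a\<leftarrow>as. [:- a, 1:])"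
    unfolding list.map prod_list.Cons by (intro proots_mult) auto
  then show ?case using Cons by simp
qed simp

text \<open>By Schur decomposition \<open>A\<close> is similar to a triangular matrix with the eigenvalues on
  its diagonal.\<close>

lemma char_poly_roots_sum_mtrace:
  fixes A :: "complex mat"
  assumes A: "A \<in> carrier_mat n n"
  obtains as where "proots (char_poly A) = mset as" "length as = n" "sum_list as = mtrace A"
proof -
  obtain as where cp: "char_poly A = (\<Prod>a\<leftarrow>as. [:- a, 1:])" and len: "length as = n"
    using char_poly_factorized[OF A] by blast
  obtain B P Q where sd: "schur_decomposition A as = (B, P, Q)"
    by (cases "schur_decomposition A as") auto
  from schur_decomposition[OF A cp sd]
  have sim: "similar_mat_wit A B P Q" and diag: "diag_mat B = as" by auto
  from sim A have car: "B \<in> carrier_mat n n" "P \<in> carrier_mat n n" "Q \<in> carrier_mat n n"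
    and QP: "Q * P = 1\<^sub>m n" and AB: "A = P * B * Q"
    unfolding similar_mat_wit_def Let_def by auto
  have "mtrace A = mtrace (P * (B * Q))" using AB car by (simp add: assoc_mult_mat[of P n n B n Q n])
  also have "\<dots> = mtrace ((B * Q) * P)" by (rule mtrace_mult_comm) (use car in auto)
  also have "\<dots> = mtrace B" using car QP by (simp add: assoc_mult_mat[of B n n Q n P n])
  also have "\<dots> = sum_list as"
    using diag car unfolding mtrace_def diag_mat_def by (auto simp: sum_list_sum_nth atLeast0LessThan)
  finally show ?thesis using that cp len proots_prod_linear_factors by auto
qed

lemma vn_entropy_eq_sum_list:
  "proots (char_poly \<sigma>) = mset as \<Longrightarrow> vn_entropy \<sigma> = - sum_list (map (\<lambda>x. Re x * log 2 (Re x)) as)"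
  unfolding vn_entropy_def by (metis mset_map sum_mset_sum_list)

lemma eigenvalue_of_char_poly_root:
  fixes A :: "complex mat"
  assumes A: "A \<in> carrier_mat n n" and x: "x \<in># proots (char_poly A)"
  shows "eigenvalue A x"
proof -
  have "char_poly A \<noteq> 0"
    using degree_monic_char_poly[OF A] by (metis leading_coeff_0_iff one_neq_zero)
  then show ?thesis using x eigenvalue_root_char_poly[OF A] by simp
qed

lemma smult_vec_cancel:
  fixes a b :: "'a :: idom"
  assumes "v \<in> carrier_vec n" "v \<noteq> 0\<^sub>v n" "a \<cdot>\<^sub>v v = b \<cdot>\<^sub>v v"
  shows "a = b"
proof -
  obtain i where i: "i < n" "v $ i \<noteq> 0" using assms(1,2) by (metis eq_vecI carrier_vecD index_zero_vec)
  have "a * v $ i = b * v $ i" using arg_cong[OF assms(3), of "\<lambda>w. w $ i"] i assms(1) by simp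
  then show ?thesis using i(2) by simp
qed

lemma psd_eigenvalue_nonneg:
  assumes "psd n A" and ev: "eigenvector A v x"
  shows "x \<in> \<real> \<and> 0 \<le> Re x"
proof -
  have A: "A \<in> carrier_mat n n" using assms(1) unfolding psd_def by simp
  then have v: "v \<in> carrier_vec n" "v \<noteq> 0\<^sub>v n" and Av: "A *\<^sub>v v = x \<cdot>\<^sub>v v"
    using ev unfolding eigenvector_def by auto
  define c where "c = conjugate v \<bullet> v"
  have "c = v \<bullet>c v" unfolding c_def using conjugate_vec_sprod_comm[OF v(1) v(1)] by simp
  then have "c \<ge> 0" "c \<noteq> 0" using v conjugate_square_eq_0_vec[OF v(1)] by auto
  then have c: "c \<in> \<real>" "Re c > 0" by (auto simp: less_eq_complex_def complex_eq_iff complex_is_Real_iff)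
  have q: "conjugate v \<bullet> (A *\<^sub>v v) = x * c" unfolding c_def Av using v by simp
  have "x * c \<in> \<real>" "0 \<le> Re (x * c)" using assms(1) v unfolding psd_def Let_def q[symmetric] by auto
  then show ?thesis using c by (auto simp: complex_is_Real_iff zero_le_mult_iff)
qed

lemma vn_entropy_nonneg:
  assumes P: "psd n A" and tr: "mtrace A = 1"
  shows "0 \<le> vn_entropy A"
proof -
  have A: "A \<in> carrier_mat n n" using P unfolding psd_def by simp
  obtain as where roots: "proots (char_poly A) = mset as" and sum: "sum_list as = mtrace A"
    using char_poly_roots_sum_mtrace[OF A] by blast
  have nonneg: "x \<in> \<real> \<and> 0 \<le> Re x" if "x \<in> set as" for x
    using eigenvalue_of_char_poly_root[OF A, of x] that roots psd_eigenvalue_nonneg[OF P]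
    unfolding eigenvalue_def by auto
  have "Re (sum_list xs) = sum_list (map Re xs)" for xs :: "complex list"
    by (induction xs) auto
  then have "sum_list (map Re as) = 1"
    using sum tr by (metis one_complex.sel(1))
  then have le1: "Re x \<le> 1" if "x \<in> set as" for x
    using member_le_sum_list[of "Re x" "map Re as"] that nonneg by auto
  have "x * log 2 x \<le> 0" if "0 \<le> x" "x \<le> 1" for x :: real
    using that by (cases "x = 0") (auto simp: mult_nonneg_nonpos)
  then show ?thesis
    unfolding vn_entropy_eq_sum_list[OF roots] using nonneg le1 by (auto intro!: sum_list_nonpos)
qed

lemma vn_entropy_idempotent:
  fixes A :: "complex mat"
  assumes A: "A \<in> carrier_mat n n" and idem: "A * A = A"
  shows "vn_entropy A = 0"
proof -
  have "x = 0 \<or> x = 1" if x: "x \<in># proots (char_poly A)" for x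
  proof -
    obtain v where v: "v \<in> carrier_vec n" "v \<noteq> 0\<^sub>v n" "A *\<^sub>v v = x \<cdot>\<^sub>v v"
      using eigenvalue_of_char_poly_root[OF A x] A unfolding eigenvalue_def eigenvector_def by auto
    have "(x * x) \<cdot>\<^sub>v v = x \<cdot>\<^sub>v v"
      using arg_cong[OF idem, of "\<lambda>B. B *\<^sub>v v"] A v
      by (simp add: mult_mat_vec smult_smult_assoc)
    then have "x * x = x" by (rule smult_vec_cancel[OF v(1,2)])
    then show ?thesis by (metis mult_cancel_left1 mult_zero_left)
  qed
  then have "Re x * log 2 (Re x) = 0" if "x \<in># proots (char_poly A)" for x
    using that by fastforce
  then show ?thesis unfolding vn_entropy_def by (auto intro!: sum_mset.neutral)
qed

lemma outer_mat_idempotent: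
  assumes "c * (\<Sum>k<n. \<phi> k * cnj (\<phi> k)) = 1"
  shows "(c \<cdot>\<^sub>m outer_mat n \<phi>) * (c \<cdot>\<^sub>m outer_mat n \<phi>) = c \<cdot>\<^sub>m outer_mat n \<phi>"
proof (rule eq_matI)
  fix i j assume ij: "i < dim_row (c \<cdot>\<^sub>m outer_mat n \<phi>)" "j < dim_col (c \<cdot>\<^sub>m outer_mat n \<phi>)"
  then have "((c \<cdot>\<^sub>m outer_mat n \<phi>) * (c \<cdot>\<^sub>m outer_mat n \<phi>)) $$ (i, j)
      = c * (\<phi> i * cnj (\<phi> j)) * (c * (\<Sum>k<n. \<phi> k * cnj (\<phi> k)))"
    by (simp add: outer_mat_def scalar_prod_def sum_distrib_left mult_ac atLeast0LessThan)
  then show "((c \<cdot>\<^sub>m outer_mat n \<phi>) * (c \<cdot>\<^sub>m outer_mat n \<phi>)) $$ (i, j) = (c \<cdot>\<^sub>m outer_mat n \<phi>) $$ (i, j)"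
    using assms ij by (simp add: outer_mat_def)
qed auto

lemma vn_entropy_normalized_outer_mat:
  "c * (\<Sum>k<n. \<phi> k * cnj (\<phi> k)) = 1 \<Longrightarrow> vn_entropy (c \<cdot>\<^sub>m outer_mat n \<phi>) = 0"
  by (rule vn_entropy_idempotent[of _ n]) (simp_all add: outer_mat_idempotent)

lemma smult_mat_mult_vec: "v \<in> carrier_vec (dim_col A) \<Longrightarrow> (c \<cdot>\<^sub>m A) *\<^sub>v v = c \<cdot>\<^sub>v (A *\<^sub>v v)"
  by (intro eq_vecI) (auto simp: scalar_prod_def sum_distrib_left mult.assoc)

lemma eigenvalue_recurrence:
  fixes A :: "complex mat"
  assumes A: "A \<in> carrier_mat n n" and rec: "A ^\<^sub>m (k + 2) = A ^\<^sub>m (k + 1) - c \<cdot>\<^sub>m A ^\<^sub>m k"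
    and x: "eigenvalue A x"
  shows "x ^ (k + 2) = x ^ (k + 1) - c * x ^ k"
proof -
  obtain v where ev: "eigenvector A v x" using x unfolding eigenvalue_def by blast
  then have v: "v \<in> carrier_vec n" "v \<noteq> 0\<^sub>v n" using A unfolding eigenvector_def by auto
  have "x ^ (k + 2) \<cdot>\<^sub>v v = A ^\<^sub>m (k + 2) *\<^sub>v v" by (rule eigenvector_pow[OF A ev, symmetric])
  also have "\<dots> = A ^\<^sub>m (k + 1) *\<^sub>v v - (c \<cdot>\<^sub>m A ^\<^sub>m k) *\<^sub>v v"
    unfolding rec by (rule minus_mult_distrib_mat_vec) (use A v in auto)
  also have "\<dots> = x ^ (k + 1) \<cdot>\<^sub>v v - c \<cdot>\<^sub>v (x ^ k \<cdot>\<^sub>v v)"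
    using A v by (subst smult_mat_mult_vec) (simp_all only: eigenvector_pow[OF A ev] pow_mat_dim_square)
  also have "\<dots> = (x ^ (k + 1) - c * x ^ k) \<cdot>\<^sub>v v"
    by (intro eq_vecI) (simp_all add: left_diff_distrib mult.assoc)
  finally show ?thesis by (rule smult_vec_cancel[OF v])
qed

lemma sum_list_map_three_values:
  fixes g :: "'a \<Rightarrow> 'b :: comm_semiring_1"
  assumes "set xs \<subseteq> {a, b, c}" "a \<noteq> b" "a \<noteq> c" "b \<noteq> c"
  shows "sum_list (map g xs)
    = of_nat (count_list xs a) * g a + of_nat (count_list xs b) * g b + of_nat (count_list xs c) * g c"
  using assms by (induction xs) (auto simp: algebra_simps)

lemma vn_entropy_binary_spectrum:
  fixes A :: "complex mat" and p q :: real
  assumes A: "A \<in> carrier_mat n n" and tr: "mtrace A = 1"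
    and pq: "p \<noteq> q" "p \<noteq> 0" "q \<noteq> 0"
    and roots: "\<And>x. x \<in># proots (char_poly A) \<Longrightarrow> x \<in> {complex_of_real p, complex_of_real q, 0}"
    and mult: "\<And>m k. m + k \<le> n \<Longrightarrow> real m * p + real k * q = 1 \<Longrightarrow> m = 1 \<and> k = 1"
  shows "vn_entropy A = - p * log 2 p - q * log 2 q"
proof -
  obtain as where pr: "proots (char_poly A) = mset as" and len: "length as = n"
    and sum: "sum_list as = mtrace A"
    using char_poly_roots_sum_mtrace[OF A] by blast
  let ?p = "complex_of_real p" and ?q = "complex_of_real q"
  have vals: "set as \<subseteq> {?p, ?q, 0}" using roots pr by auto
  have ne: "?p \<noteq> ?q" "?p \<noteq> 0" "?q \<noteq> 0" using pq by auto
  define m k where "m = count_list as ?p" and "k = count_list as ?q"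
  have "length as = m + k + count_list as 0"
    using sum_list_map_three_values[OF vals ne, of "\<lambda>_. 1 :: nat"]
    unfolding m_def k_def by (simp add: sum_list_triv)
  then have "m + k \<le> n" using len by simp
  moreover have "complex_of_real (real m * p + real k * q) = 1"
    using sum_list_map_three_values[OF vals ne, of id] sum tr unfolding m_def k_def by simp
  then have "real m * p + real k * q = 1" by (metis of_real_eq_1_iff)
  ultimately have mk: "m = 1" "k = 1" using mult by blast+
  show ?thesis
    unfolding vn_entropy_eq_sum_list[OF pr] sum_list_map_three_values[OF vals ne]
    using mk unfolding m_def k_def by simp
qed

definition lam_plus :: real where "lam_plus = (16 + sqrt 229) / 32"
definition lam_minus :: real where "lam_minus = (16 - sqrt 229) / 32"

lemma lam_plus_minus_vieta: "lam_plus + lam_minus = 1" "lam_plus * lam_minus = 27 / 1024"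
  unfolding lam_plus_def lam_minus_def by (simp_all add: field_simps)

lemma lam_plus_minus_pos: "0 < lam_plus" "0 < lam_minus" "lam_plus \<noteq> lam_minus"
proof -
  have "sqrt 229 < (16 :: real)" by (rule real_sqrt_less_mono[of 229 256, simplified])
  then show "0 < lam_plus" "0 < lam_minus" "lam_plus \<noteq> lam_minus"
    unfolding lam_plus_def lam_minus_def by (auto intro: add_pos_nonneg)
qed

lemma quadratic_roots_lam:
  fixes x :: complex
  assumes "x * x - x + 27 / 1024 = 0"
  shows "x = complex_of_real lam_plus \<or> x = complex_of_real lam_minus"
proof -
  have "(x - complex_of_real lam_plus) * (x - complex_of_real lam_minus)
      = x * x - complex_of_real (lam_plus + lam_minus) * x + complex_of_real (lam_plus * lam_minus)"
    by (simp add: algebra_simps)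
  also have "\<dots> = 0" unfolding lam_plus_minus_vieta using assms by simp
  finally show ?thesis by simp
qed

text \<open>Since \<open>\<surd>229\<close> is irrational, \<open>m \<lambda>\<^sub>+ + k \<lambda>\<^sub>- = 1\<close> forces \<open>m = k = 1\<close>; for the
  bounded multiplicities needed here it suffices to square out the root and check all cases.\<close>

lemma lam_plus_minus_multiplicities:
  fixes m k :: nat
  assumes "m + k \<le> 4" and eq: "real m * lam_plus + real k * lam_minus = 1"
  shows "m = 1 \<and> k = 1"
proof -
  have root: "real_of_int (int m - int k) * sqrt 229 = real_of_int (32 - 16 * (int m + int k))"
    using eq unfolding lam_plus_def lam_minus_def by (simp add: field_simps)
  have "real_of_int ((int m - int k)\<^sup>2 * 229) = (real_of_int (int m - int k) * sqrt 229)\<^sup>2"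
    by (simp add: power_mult_distrib)
  then have "(int m - int k)\<^sup>2 * 229 = (32 - 16 * (int m + int k))\<^sup>2"
    unfolding root by (metis of_int_eq_iff of_int_power)
  moreover have "m \<in> {0, 1, 2, 3, 4}" "k \<in> {0, 1, 2, 3, 4}" using assms(1) by auto
  ultimately have "m = k" by (auto simp: power2_eq_square)
  moreover have "real k * (lam_plus + lam_minus) = 1" using eq \<open>m = k\<close> by (simp add: distrib_left)
  ultimately show ?thesis using lam_plus_minus_vieta(1) by simp
qed

section \<open>Discord of pure states\<close>

definition weighted_cond_entropy :: "nat \<Rightarrow> nat \<Rightarrow> complex mat \<Rightarrow> complex mat \<Rightarrow> real" where
  "weighted_cond_entropy dX dY R E =
     (let M = kron_id dX dY E * R; p = Re (mtrace M)
      in p * vn_entropy ((1 / complex_of_real p) \<cdot>\<^sub>m ptrace_X dX dY M))"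

lemma discord_weighted_cond_entropy:
  "discord dX dY R =
     Inf {\<Sum>a<length Es. weighted_cond_entropy dX dY R (Es ! a) | Es. povm dX Es}
     + vn_entropy (ptrace_Y dX dY R) - vn_entropy R"
  unfolding discord_def weighted_cond_entropy_def ..

lemma block_index_less: "a < dX \<Longrightarrow> b < dY \<Longrightarrow> a * dY + b < dX * (dY :: nat)"
proof -
  assume "a < dX" "b < dY"
  then have "a * dY + b < Suc a * dY" by simp
  also have "\<dots> \<le> dX * dY" using \<open>a < dX\<close> by (intro mult_le_mono1) simp
  finally show ?thesis .
qed

lemma sum_block_index:
  fixes f :: "nat \<Rightarrow> 'a :: comm_monoid_add"
  shows "(\<Sum>i<dX * dY. f i) = (\<Sum>a<dX. \<Sum>b<dY. f (a * dY + b))"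
proof -
  have block: "sum f {a * dY..<a * dY + dY} = (\<Sum>b<dY. f (a * dY + b))" for a
    using sum.shift_bounds_nat_ivl[of f 0 "a * dY" dY] by (simp add: atLeast0LessThan add.commute)
  have "(\<Sum>i<dX * dY. f i) = (\<Sum>a<dX. sum f {a * dY..<a * dY + dY})"
    using sum.nat_group[of f dY dX] by simp
  also have "\<dots> = (\<Sum>a<dX. \<Sum>b<dY. f (a * dY + b))"
    by (simp only: block)
  finally show ?thesis .
qed

lemma mtrace_ptrace_X:
  assumes "M \<in> carrier_mat (dX * dY) (dX * dY)"
  shows "mtrace (ptrace_X dX dY M) = mtrace M"
proof -
  have "mtrace M = (\<Sum>a<dX. \<Sum>b<dY. M $$ (a * dY + b, a * dY + b))"
    using assms unfolding mtrace_def by (simp add: sum_block_index)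
  also have "\<dots> = mtrace (ptrace_X dX dY M)"
    unfolding mtrace_def ptrace_X_def by (simp add: sum.swap[of _ "{..<dX}"])
  finally show ?thesis by simp
qed

lemma psd_mtrace_nonneg:
  assumes "psd n N"
  shows "mtrace N \<in> \<real> \<and> 0 \<le> Re (mtrace N)"
proof -
  have N: "N \<in> carrier_mat n n" using assms unfolding psd_def by simp
  have diag: "N $$ (i, i) = conjugate (unit_vec n i) \<bullet> (N *\<^sub>v unit_vec n i)" if "i < n" for i
  proof -
    have "conjugate (unit_vec n i) = (unit_vec n i :: complex vec)" by (intro eq_vecI) (auto simp: unit_vec_def)
    then show ?thesis using N that by simp
  qed
  have "N $$ (i, i) \<in> \<real> \<and> 0 \<le> Re (N $$ (i, i))" if "i < n" for i
    using assms that unfolding diag[OF that] psd_def Let_def by simp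
  then show ?thesis using N unfolding mtrace_def by (auto intro!: sum_in_Reals sum_nonneg)
qed

lemma psd_smult:
  assumes "psd n N" "0 \<le> r"
  shows "psd n (complex_of_real r \<cdot>\<^sub>m N)"
  unfolding psd_def Let_def
proof (intro conjI ballI)
  have N: "N \<in> carrier_mat n n" using assms(1) unfolding psd_def by simp
  then show "complex_of_real r \<cdot>\<^sub>m N \<in> carrier_mat n n" by simp
  fix v :: "complex vec" assume v: "v \<in> carrier_vec n"
  have "conjugate v \<bullet> ((complex_of_real r \<cdot>\<^sub>m N) *\<^sub>v v) = complex_of_real r * (conjugate v \<bullet> (N *\<^sub>v v))"
    using N v by (simp add: smult_mat_mult_vec scalar_prod_smult_right)
  moreover have "conjugate v \<bullet> (N *\<^sub>v v) \<in> \<real>" "0 \<le> Re (conjugate v \<bullet> (N *\<^sub>v v))"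
    using assms(1) v unfolding psd_def Let_def by auto
  ultimately show "conjugate v \<bullet> ((complex_of_real r \<cdot>\<^sub>m N) *\<^sub>v v) \<in> \<real>"
    "0 \<le> Re (conjugate v \<bullet> ((complex_of_real r \<cdot>\<^sub>m N) *\<^sub>v v))"
    using assms(2) by (auto simp: complex_is_Real_iff)
qed

lemma psd_outer_mat: "psd n (outer_mat n \<phi>)"
  unfolding psd_def Let_def
proof (intro conjI ballI)
  fix v :: "complex vec" assume v: "v \<in> carrier_vec n"
  define z where "z = (\<Sum>i<n. cnj (v $ i) * \<phi> i)"
  have "conjugate v \<bullet> (outer_mat n \<phi> *\<^sub>v v) = z * cnj z"
    using v unfolding z_def outer_mat_def
    by (simp add: scalar_prod_def sum_distrib_left sum_distrib_right mult_ac atLeast0LessThan)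
      (rule sum.swap)
  also have "\<dots> = complex_of_real ((cmod z)\<^sup>2)" by (simp add: complex_norm_square del: of_real_power)
  finally show "conjugate v \<bullet> (outer_mat n \<phi> *\<^sub>v v) \<in> \<real>" "0 \<le> Re (conjugate v \<bullet> (outer_mat n \<phi> *\<^sub>v v))"
    by auto
qed simp

lemma kron_id_mult_outer_mat_index:
  assumes E: "E \<in> carrier_mat dX dX" and a: "a < dX" and b: "b < dY" and i: "i < dX * dY"
  shows "(kron_id dX dY E * outer_mat (dX * dY) \<phi>) $$ (a * dY + b, i)
     = (\<Sum>c<dX. E $$ (a, c) * \<phi> (c * dY + b)) * cnj (\<phi> i)"
proof -
  have "(kron_id dX dY E * outer_mat (dX * dY) \<phi>) $$ (a * dY + b, i)
      = (\<Sum>j<dX * dY. (if (a * dY + b) mod dY = j mod dY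
          then E $$ ((a * dY + b) div dY, j div dY) else 0) * (\<phi> j * cnj (\<phi> i)))"
    using block_index_less[OF a b] i by (simp add: kron_id_def outer_mat_def scalar_prod_def atLeast0LessThan)
  also have "\<dots> = (\<Sum>c<dX. \<Sum>d<dY. (if b = d then E $$ (a, c) else 0) * (\<phi> (c * dY + d) * cnj (\<phi> i)))"
    unfolding sum_block_index using b by (intro sum.cong refl) auto
  also have "\<dots> = (\<Sum>c<dX. E $$ (a, c) * \<phi> (c * dY + b)) * cnj (\<phi> i)"
    using b by (simp add: if_distrib[of "\<lambda>x. x * _"] sum_distrib_right mult.assoc cong: if_cong)
  finally show ?thesis .
qed

lemma ptrace_X_kron_id_outer_mat:
  assumes E: "E \<in> carrier_mat dX dX"
  shows "ptrace_X dX dY (kron_id dX dY E * outer_mat (dX * dY) \<phi>)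
       = mat dY dY (\<lambda>(b, b'). \<Sum>a<dX. \<Sum>c<dX. E $$ (a, c) * \<phi> (c * dY + b) * cnj (\<phi> (a * dY + b')))"
  by (rule eq_matI)
    (auto simp: ptrace_X_def kron_id_mult_outer_mat_index[OF E] block_index_less sum_distrib_right)

text \<open>For a pure state the conditional states are compressions of the effect:
  \<open>\<langle>v, N v\<rangle> = \<langle>w, E w\<rangle>\<close> with \<open>w\<^sub>c = \<Sum>\<^sub>b v\<^sub>b\<^sup>* \<phi>(c, b)\<close>.\<close>

lemma psd_ptrace_X_kron_id_outer_mat:
  assumes P: "psd dX E"
  shows "psd dY (ptrace_X dX dY (kron_id dX dY E * outer_mat (dX * dY) \<phi>))"
proof -
  have E: "E \<in> carrier_mat dX dX" using P unfolding psd_def by simp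
  have quad: "conjugate v \<bullet> (ptrace_X dX dY (kron_id dX dY E * outer_mat (dX * dY) \<phi>) *\<^sub>v v)
      = conjugate w \<bullet> (E *\<^sub>v w)"
    if v: "v \<in> carrier_vec dY" and w: "w = vec dX (\<lambda>c. \<Sum>b<dY. cnj (v $ b) * \<phi> (c * dY + b))" for v w
  proof -
    have "conjugate v \<bullet> (ptrace_X dX dY (kron_id dX dY E * outer_mat (dX * dY) \<phi>) *\<^sub>v v)
      = (\<Sum>b<dY. \<Sum>b'<dY. \<Sum>a<dX. \<Sum>c<dX.
          cnj (v $ b) * E $$ (a, c) * \<phi> (c * dY + b) * cnj (\<phi> (a * dY + b')) * v $ b')"
      using v unfolding ptrace_X_kron_id_outer_mat[OF E]
      by (simp add: scalar_prod_def sum_distrib_left sum_distrib_right mult_ac atLeast0LessThan)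
    also have "\<dots> = (\<Sum>a<dX. \<Sum>c<dX. \<Sum>b<dY. \<Sum>b'<dY.
          cnj (v $ b) * E $$ (a, c) * \<phi> (c * dY + b) * cnj (\<phi> (a * dY + b')) * v $ b')"
      by (simp only: sum.swap[of _ "{..<dY}" "{..<dX}"])
    also have "\<dots> = conjugate w \<bullet> (E *\<^sub>v w)"
      using E unfolding w
      by (simp add: scalar_prod_def sum_distrib_left sum_distrib_right mult_ac atLeast0LessThan)
    finally show ?thesis .
  qed
  show ?thesis using quad P unfolding psd_def Let_def by (auto simp: ptrace_X_def)
qed

lemma kron_id_mult_carrier:
  "B \<in> carrier_mat (dX * dY) (dX * dY) \<Longrightarrow> kron_id dX dY E * B \<in> carrier_mat (dX * dY) (dX * dY)"
  unfolding kron_id_def by (rule mult_carrier_mat) auto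

lemma mtrace_smult: "A \<in> carrier_mat n n \<Longrightarrow> mtrace (c \<cdot>\<^sub>m A) = c * mtrace A"
  unfolding mtrace_def by (simp add: sum_distrib_left)

lemma weighted_cond_entropy_outer_mat_nonneg:
  assumes P: "psd dX E"
  shows "0 \<le> weighted_cond_entropy dX dY (outer_mat (dX * dY) \<phi>) E"
proof -
  define M where "M = kron_id dX dY E * outer_mat (dX * dY) \<phi>"
  define N where "N = ptrace_X dX dY M"
  define p where "p = Re (mtrace M)"
  have M: "M \<in> carrier_mat (dX * dY) (dX * dY)" unfolding M_def by (simp add: kron_id_mult_carrier)
  have psdN: "psd dY N" unfolding N_def M_def by (rule psd_ptrace_X_kron_id_outer_mat[OF P])
  have trN: "mtrace N = complex_of_real p" "0 \<le> p"
    using psd_mtrace_nonneg[OF psdN] unfolding p_def N_def mtrace_ptrace_X[OF M]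
    by (auto simp: complex_is_Real_iff complex_eq_iff)
  have "0 \<le> p * vn_entropy ((1 / complex_of_real p) \<cdot>\<^sub>m N)"
  proof (cases "p = 0")
    case False
    then have "0 < p" using trN by simp
    have "psd dY ((1 / complex_of_real p) \<cdot>\<^sub>m N)"
      using psd_smult[OF psdN, of "1 / p"] \<open>0 < p\<close> by simp
    moreover have "mtrace ((1 / complex_of_real p) \<cdot>\<^sub>m N) = 1"
      using psdN trN \<open>0 < p\<close> mtrace_smult[of N dY] unfolding psd_def by simp
    ultimately have "0 \<le> vn_entropy ((1 / complex_of_real p) \<cdot>\<^sub>m N)" by (rule vn_entropy_nonneg)
    then show ?thesis using \<open>0 < p\<close> by simp
  qed simp
  then show ?thesis unfolding weighted_cond_entropy_def M_def[symmetric] N_def[symmetric] p_def[symmetric] Let_def .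
qed

definition basis_povm :: "nat \<Rightarrow> complex mat list" where
  "basis_povm d = map (\<lambda>a. outer_mat d (\<lambda>i. of_bool (i = a))) [0..<d]"

lemma length_basis_povm [simp]: "length (basis_povm d) = d"
  unfolding basis_povm_def by simp

lemma cnj_of_bool [simp]: "cnj (of_bool P) = of_bool P"
  by (cases P) auto

lemma povm_basis_povm: "povm d (basis_povm d)"
  unfolding povm_def
proof (intro conjI ballI allI impI)
  show "psd d E" if "E \<in> set (basis_povm d)" for E
    using that unfolding basis_povm_def by (auto simp: psd_outer_mat)
  show "(\<Sum>a<length (basis_povm d). basis_povm d ! a $$ (i, j)) = 1\<^sub>m d $$ (i, j)" if "i < d" "j < d" for i j
    using that unfolding basis_povm_def outer_mat_def by simp
qed

lemma weighted_cond_entropy_outer_mat_basis: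
  assumes a: "a < dX"
  shows "weighted_cond_entropy dX dY (outer_mat (dX * dY) \<phi>) (basis_povm dX ! a) = 0"
proof -
  define E where "E = basis_povm dX ! a"
  define f where "f b = \<phi> (a * dY + b)" for b
  define M where "M = kron_id dX dY E * outer_mat (dX * dY) \<phi>"
  define p where "p = Re (mtrace M)"
  have E: "E = outer_mat dX (\<lambda>i. of_bool (i = a))" unfolding E_def basis_povm_def using a by simp
  have M: "M \<in> carrier_mat (dX * dY) (dX * dY)" unfolding M_def by (simp add: kron_id_mult_carrier)
  have "E \<in> carrier_mat dX dX" unfolding E by simp
  then have N: "ptrace_X dX dY M = outer_mat dY f"
    unfolding M_def ptrace_X_kron_id_outer_mat[OF \<open>E \<in> carrier_mat dX dX\<close>]
    unfolding E outer_mat_def f_def using a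
    by (intro eq_matI) (simp_all add: mult.assoc flip: sum_distrib_left)
  have "mtrace (outer_mat dY f) = complex_of_real (\<Sum>k<dY. (cmod (f k))\<^sup>2)"
    unfolding mtrace_def outer_mat_def by (simp add: complex_norm_square del: of_real_power)
  then have "mtrace (outer_mat dY f) = complex_of_real p"
    unfolding p_def mtrace_ptrace_X[OF M, symmetric] N by simp
  then have tr: "(\<Sum>k<dY. f k * cnj (f k)) = complex_of_real p"
    unfolding mtrace_def outer_mat_def by simp
  have "p * vn_entropy ((1 / complex_of_real p) \<cdot>\<^sub>m outer_mat dY f) = 0"
  proof (cases "p = 0")
    case False
    then have "(1 / complex_of_real p) * (\<Sum>k<dY. f k * cnj (f k)) = 1" unfolding tr by simp
    then show ?thesis by (simp add: vn_entropy_normalized_outer_mat)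
  qed simp
  then show ?thesis unfolding weighted_cond_entropy_def E_def[symmetric] M_def[symmetric] p_def[symmetric] Let_def N .
qed

lemma discord_outer_mat:
  "discord dX dY (outer_mat (dX * dY) \<phi>)
   = vn_entropy (ptrace_Y dX dY (outer_mat (dX * dY) \<phi>)) - vn_entropy (outer_mat (dX * dY) \<phi>)"
proof -
  let ?R = "outer_mat (dX * dY) \<phi>"
  let ?S = "{\<Sum>a<length Es. weighted_cond_entropy dX dY ?R (Es ! a) | Es. povm dX Es}"
  have "(\<Sum>a<length (basis_povm dX). weighted_cond_entropy dX dY ?R (basis_povm dX ! a)) = 0"
    by (auto intro!: sum.neutral weighted_cond_entropy_outer_mat_basis)
  then have "0 \<in> ?S" using povm_basis_povm by force
  moreover have "0 \<le> s" if "s \<in> ?S" for s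
    using that unfolding povm_def
    by (force intro!: sum_nonneg weighted_cond_entropy_outer_mat_nonneg)
  ultimately have "Inf ?S = 0" by (intro cInf_eq_minimum) auto
  then show ?thesis unfolding discord_weighted_cond_entropy by simp
qed

section \<open>The state \<open>\<rho>\<^sub>4\<close>\<close>

definition psi4_weight :: "nat \<Rightarrow> complex" where
  "psi4_weight j = (if j = 7 then -11 else 1)"

lemma rho4_outer_mat: "rho4 = outer_mat 8 (\<lambda>j. psi4 $ j)"
  unfolding rho4_def outer_mat_def ..

lemma psi4_amplitude_mult:
  assumes "i < 8" "j < 8"
  shows "psi4 $ i * cnj (psi4 $ j) = psi4_weight i * psi4_weight j / 128"
proof -
  have amp: "psi4 $ k = - psi4_weight k / (8 * complex_of_real (sqrt 2))" if "k < 8" for k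
    using that unfolding psi4_def psi4_weight_def by simp
  have "cnj (psi4_weight j) = psi4_weight j" unfolding psi4_weight_def by simp
  then have "psi4 $ i * cnj (psi4 $ j)
      = psi4_weight i * psi4_weight j / (64 * (complex_of_real (sqrt 2) * complex_of_real (sqrt 2)))"
    using assms by (simp add: amp)
  also have "complex_of_real (sqrt 2) * complex_of_real (sqrt 2) = complex_of_real (sqrt 2 * sqrt 2)"
    by (simp only: of_real_mult)
  also have "\<dots> = 2" by simp
  finally show ?thesis by simp
qed

lemma rho4_eq: "rho4 = mat 8 8 (\<lambda>(i, j). psi4_weight i * psi4_weight j / 128)"
  unfolding rho4_def by (rule eq_matI) (auto simp: psi4_amplitude_mult)

lemma vn_entropy_rho4: "vn_entropy rho4 = 0"
proof -
  have "1 * (\<Sum>k<8. psi4 $ k * cnj (psi4 $ k)) = 1"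
    by (simp add: psi4_amplitude_mult psi4_weight_def eval_nat_numeral)
  moreover have "1 \<cdot>\<^sub>m rho4 = rho4" by (intro eq_matI) auto
  ultimately show ?thesis unfolding rho4_outer_mat by (metis vn_entropy_normalized_outer_mat)
qed

lemma perm_index_three: "perm_index [a, b, c] i = qbit i 0 * 2 ^ (2 - a) + qbit i 1 * 2 ^ (2 - b) + qbit i 2 * 2 ^ (2 - c)"
  unfolding perm_index_def by (simp add: eval_nat_numeral)

lemma perm_index_permutation:
  assumes "distinct ks" "set ks = {0, 1, 2}" and "i < 8"
  shows "perm_index ks i < 8 \<and> (perm_index ks i = 7 \<longleftrightarrow> i = 7)"
proof -
  have "length ks = 3" using distinct_card[OF assms(1)] assms(2) by simp
  then have "ks = [ks ! 0, ks ! 1, ks ! 2]"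
    by (intro nth_equalityI) (auto simp: less_Suc_eq numeral_3_eq_3 numeral_2_eq_2)
  then obtain a b c where ks: "ks = [a, b, c]" by blast
  have abc: "{a, b, c} = {0, 1, 2 :: nat}" using assms(2) ks by simp
  have "a \<in> {0, 1, 2}" "b \<in> {0, 1, 2}" "c \<in> {0, 1, 2}" using abc by blast+
  then have "ks \<in> {[0, 1, 2], [0, 2, 1], [1, 0, 2], [1, 2, 0], [2, 0, 1], [2, 1, 0]}"
    using assms(1) ks by auto
  moreover have "i \<in> {0, 1, 2, 3, 4, 5, 6, 7}" using assms(3) by auto
  ultimately show ?thesis by (auto simp: perm_index_three qbit_def)
qed

lemma reorder_rho4:
  assumes "distinct ks" "set ks = {0, 1, 2}"
  shows "reorder ks rho4 = rho4"
proof (rule eq_matI)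
  fix i j assume "i < dim_row rho4" "j < dim_col rho4"
  then have "i < 8" "j < 8" unfolding rho4_def by simp_all
  then show "reorder ks rho4 $$ (i, j) = rho4 $$ (i, j)"
    using perm_index_permutation[OF assms \<open>i < 8\<close>] perm_index_permutation[OF assms \<open>j < 8\<close>]
    unfolding reorder_def rho4_eq by (simp add: psi4_weight_def)
qed (simp_all add: reorder_def rho4_def)


lemma discord_rho4:
  assumes "dX * dY = 8"
  shows "discord dX dY rho4 = vn_entropy (ptrace_Y dX dY rho4)"
proof -
  have "rho4 = outer_mat (dX * dY) (\<lambda>j. psi4 $ j)" unfolding assms by (rule rho4_outer_mat)
  then show ?thesis using discord_outer_mat[of dX dY "\<lambda>j. psi4 $ j"] vn_entropy_rho4 by (metis diff_zero)
qed

lemma discord3_rho4: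
  assumes "distinct (X @ Y)" "set (X @ Y) = {0, 1, 2}"
  shows "discord3 Y X rho4 = vn_entropy (ptrace_Y (2 ^ length X) (2 ^ length Y) rho4)"
proof -
  have "length X + length Y = 3"
    using distinct_card[OF assms(1)] assms(2) by simp
  then have "2 ^ length X * 2 ^ length Y = (8 :: nat)" by (simp flip: power_add)
  then show ?thesis unfolding discord3_def reorder_rho4[OF assms] by (rule discord_rho4)
qed

lemma rho_A4_eq:
  "rho_A4 = mat 2 2 (\<lambda>(i, j). if i = 0 \<and> j = 0 then 1 / 32 else if i = 1 \<and> j = 1 then 31 / 32 else - 1 / 16)"
  unfolding rho_A4_def ptrace_Y_def
  by (intro eq_matI) (auto simp: rho4_eq psi4_weight_def eval_nat_numeral less_Suc_eq)

lemma rho_A4B4_eq: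
  "rho_A4B4 = mat 4 4 (\<lambda>(i, j). (if i = 3 \<and> j = 3 then 122 else if i = 3 \<or> j = 3 then - 10 else 2) / 128)"
  unfolding rho_A4B4_def ptrace_Y_def
  by (intro eq_matI) (auto simp: rho4_eq psi4_weight_def eval_nat_numeral less_Suc_eq)

lemma rho_A4_recurrence: "rho_A4 ^\<^sub>m 2 = rho_A4 ^\<^sub>m 1 - (27 / 1024) \<cdot>\<^sub>m rho_A4 ^\<^sub>m 0"
  unfolding rho_A4_eq
  by (intro eq_matI) (auto simp: scalar_prod_def eval_nat_numeral less_Suc_eq)

lemma rho_A4B4_recurrence: "rho_A4B4 ^\<^sub>m 3 = rho_A4B4 ^\<^sub>m 2 - (27 / 1024) \<cdot>\<^sub>m rho_A4B4 ^\<^sub>m 1"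
  unfolding rho_A4B4_eq
  by (intro eq_matI) (auto simp: scalar_prod_def eval_nat_numeral less_Suc_eq)

lemma vn_entropy_lam_spectrum:
  fixes A :: "complex mat"
  assumes A: "A \<in> carrier_mat n n" and n: "n \<le> 4" and tr: "mtrace A = 1"
    and rec: "A ^\<^sub>m (k + 2) = A ^\<^sub>m (k + 1) - (27 / 1024) \<cdot>\<^sub>m A ^\<^sub>m k"
  shows "vn_entropy A = - lam_plus * log 2 lam_plus - lam_minus * log 2 lam_minus"
proof (rule vn_entropy_binary_spectrum[OF A tr])
  show "lam_plus \<noteq> lam_minus" "lam_plus \<noteq> 0" "lam_minus \<noteq> 0" using lam_plus_minus_pos by auto
  show "m = 1 \<and> k = 1" if "m + k \<le> n" "real m * lam_plus + real k * lam_minus = 1" for m k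
    using that n by (intro lam_plus_minus_multiplicities) simp_all
  fix x assume "x \<in># proots (char_poly A)"
  then have "x ^ k * (x * x - x + 27 / 1024) = 0"
    using eigenvalue_recurrence[OF A rec eigenvalue_of_char_poly_root[OF A]] by (simp add: algebra_simps)
  then show "x \<in> {complex_of_real lam_plus, complex_of_real lam_minus, 0}"
    using quadratic_roots_lam by auto
qed

lemma vn_entropy_rho_A4: "vn_entropy rho_A4 = - lam_plus * log 2 lam_plus - lam_minus * log 2 lam_minus"
proof (rule vn_entropy_lam_spectrum[where n = 2 and k = 0])
  show "rho_A4 ^\<^sub>m (0 + 2) = rho_A4 ^\<^sub>m (0 + 1) - (27 / 1024) \<cdot>\<^sub>m rho_A4 ^\<^sub>m 0"
    using rho_A4_recurrence by (simp add: numeral_2_eq_2 numeral_3_eq_3 del: pow_mat.simps)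
qed (simp_all add: rho_A4_eq mtrace_def eval_nat_numeral)

lemma vn_entropy_rho_A4B4: "vn_entropy rho_A4B4 = - lam_plus * log 2 lam_plus - lam_minus * log 2 lam_minus"
proof (rule vn_entropy_lam_spectrum[where n = 4 and k = 1])
  show "rho_A4B4 ^\<^sub>m (1 + 2) = rho_A4B4 ^\<^sub>m (1 + 1) - (27 / 1024) \<cdot>\<^sub>m rho_A4B4 ^\<^sub>m 1"
    using rho_A4B4_recurrence by (simp add: numeral_2_eq_2 numeral_3_eq_3 del: pow_mat.simps)
qed (simp_all add: rho_A4B4_eq mtrace_def eval_nat_numeral)

lemma discord3_rho4_one_qubit:
  assumes "distinct [x, y, y']" "set [x, y, y'] = {0, 1, 2}"
  shows "discord3 [y, y'] [x] rho4 = vn_entropy rho_A4"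
  using discord3_rho4[of "[x]" "[y, y']"] assms by (simp add: rho_A4_def)

lemma discord3_rho4_two_qubits:
  assumes "distinct [x, x', y]" "set [x, x', y] = {0, 1, 2}"
  shows "discord3 [y] [x, x'] rho4 = vn_entropy rho_A4B4"
  using discord3_rho4[of "[x, x']" "[y]"] assms by (simp add: rho_A4B4_def)

theorem lemma4:
  defines "v \<equiv> - (1/32) * (16 + sqrt 229) * log 2 ((1/32) * (16 + sqrt 229))
                - (1/32) * (16 - sqrt 229) * log 2 ((1/32) * (16 - sqrt 229))"
  shows "discord3 [1, 2] [0] rho4 = discord3 [0, 2] [1] rho4
       \<and> discord3 [0, 2] [1] rho4 = discord3 [0, 1] [2] rho4
       \<and> discord3 [0, 1] [2] rho4 = discord3 [2] [0, 1] rho4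
       \<and> discord3 [2] [0, 1] rho4 = discord3 [1] [0, 2] rho4
       \<and> discord3 [1] [0, 2] rho4 = discord3 [0] [1, 2] rho4
       \<and> discord3 [0] [1, 2] rho4 = v
       \<and> discord3 [1, 2] [0] rho4 = vn_entropy rho_A4
       \<and> discord3 [2] [0, 1] rho4 = vn_entropy rho_A4B4"
proof -
  have "v = - lam_plus * log 2 lam_plus - lam_minus * log 2 lam_minus"
    unfolding v_def lam_plus_def lam_minus_def by simp
  then have "vn_entropy rho_A4 = v" "vn_entropy rho_A4B4 = v"
    using vn_entropy_rho_A4 vn_entropy_rho_A4B4 by simp_all
  moreover have
    "discord3 [1, 2] [0] rho4 = vn_entropy rho_A4" "discord3 [0, 2] [1] rho4 = vn_entropy rho_A4"
    "discord3 [0, 1] [2] rho4 = vn_entropy rho_A4" "discord3 [2] [0, 1] rho4 = vn_entropy rho_A4B4"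
    "discord3 [1] [0, 2] rho4 = vn_entropy rho_A4B4" "discord3 [0] [1, 2] rho4 = vn_entropy rho_A4B4"
    by (auto intro!: discord3_rho4_one_qubit discord3_rho4_two_qubits)
  ultimately show ?thesis by simp
qed

end
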